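(* Let $I:(0,1)\to(0,1)$ be an increasing bijection satisfying $I(2t)\approx I(t)$ for $t\in(0,\frac12)$, and let $X$ be an r.i. space. Define $\|f\|_Z:=\|S_If\|_X$ for measurable $f$ on $(0,1)$. Then $\|\cdot\|_Z$ is an r.i.q. norm, and, denoting by $Z$ the corresponding r.i.q. space, $S_I$ is bounded on $Z$. If moreover $\int_0^t\frac{ds}{I(s)}\lesssim\frac{t}{I(t)}$ for $t\in(0,1)$, then $\|\cdot\|_Z$ is equivalent to an r.i. norm, so $Z$ is an r.i. space.
   Context: $f^*$: nonincreasing rearrangement on $(0,1)$; $S_If(t)=\frac1{I(t)}\sup_{0<s\le t}I(s)f^*(s)$. An r.i. norm $\rho$ on nonnegative measurable functions on $(0,1)$ is a norm with $\rho(f)=0$ iff $f=0$ a.e., the lattice property, the Fatou property ($f_n\nearrow f$ a.e. $\Rightarrow\rho(f_n)\nearrow\rho(f)$), $\rho(\chi_{(0,1)})<\infty$, $\int_0^1f\lesssim\rho(f)$ and $\rho(f)=\rho(f^* )$; an r.i. space is the space of $f$ with $\rho(|f|)<\infty$. An r.i.q. norm satisfies the same except the last-but-one, with the triangle inequality replaced by $\rho(f+g)\le C(\rho(f)+\rho(g))$ for some $C\ge1$. $S_I$ bounded on $Z$ means $\|S_If\|_Z\lesssim\|f\|_Z$. *)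

theory Defs
  imports "HOL-Analysis.Analysis"
begin

text \<open>Nonnegative functions on (0,1) are modelled as functions real => ennreal;
  only their values on (0,1) matter (measurability, a.e. statements and
  integrals all refer to Lebesgue measure restricted to (0,1)).\<close>

abbreviation unitI :: "real set" where "unitI \<equiv> {0<..<1}"

definition meas01 :: "(real \<Rightarrow> ennreal) \<Rightarrow> bool" where
  "meas01 f \<longleftrightarrow> f \<in> borel_measurable (lebesgue_on unitI)"

definition distrib_fun :: "(real \<Rightarrow> ennreal) \<Rightarrow> ennreal \<Rightarrow> ennreal" where
  "distrib_fun f y = emeasure lebesgue {t \<in> unitI. y < f t}"

definition rearr :: "(real \<Rightarrow> ennreal) \<Rightarrow> real \<Rightarrow> ennreal" where
  "rearr f t = Inf {y. distrib_fun f y \<le> ennreal t}"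

definition S_op :: "(real \<Rightarrow> real) \<Rightarrow> (real \<Rightarrow> ennreal) \<Rightarrow> real \<Rightarrow> ennreal" where
  "S_op I f t = (SUP s\<in>{0<..t}. ennreal (I s) * rearr f s) / ennreal (I t)"

definition ri_common :: "((real \<Rightarrow> ennreal) \<Rightarrow> ennreal) \<Rightarrow> bool" where
  "ri_common \<rho> \<longleftrightarrow>
     (\<forall>f a. meas01 f \<and> 0 \<le> a \<longrightarrow> \<rho> (\<lambda>t. ennreal a * f t) = ennreal a * \<rho> f) \<and>
     (\<forall>f. meas01 f \<longrightarrow> (\<rho> f = 0 \<longleftrightarrow> (AE t in lebesgue_on unitI. f t = 0))) \<and>
     (\<forall>f g. meas01 f \<and> meas01 g \<and> (AE t in lebesgue_on unitI. g t \<le> f t) \<longrightarrow> \<rho> g \<le> \<rho> f) \<and>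
     (\<forall>F f. (\<forall>n. meas01 (F n)) \<and> meas01 f \<and>
        (AE t in lebesgue_on unitI. incseq (\<lambda>n. F n t) \<and> (\<lambda>n. F n t) \<longlonglongrightarrow> f t)
        \<longrightarrow> incseq (\<lambda>n. \<rho> (F n)) \<and> (\<lambda>n. \<rho> (F n)) \<longlonglongrightarrow> \<rho> f) \<and>
     \<rho> (indicator unitI) < \<infinity> \<and>
     (\<forall>f. meas01 f \<longrightarrow> \<rho> f = \<rho> (rearr f))"

definition ri_norm :: "((real \<Rightarrow> ennreal) \<Rightarrow> ennreal) \<Rightarrow> bool" where
  "ri_norm \<rho> \<longleftrightarrow> ri_common \<rho> \<and>
     (\<forall>f g. meas01 f \<and> meas01 g \<longrightarrow> \<rho> (\<lambda>t. f t + g t) \<le> \<rho> f + \<rho> g) \<and>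
     (\<exists>C::real. \<forall>f. meas01 f \<longrightarrow> (\<integral>\<^sup>+ t\<in>unitI. f t \<partial>lebesgue) \<le> ennreal C * \<rho> f)"

definition riq_norm :: "((real \<Rightarrow> ennreal) \<Rightarrow> ennreal) \<Rightarrow> bool" where
  "riq_norm \<rho> \<longleftrightarrow> ri_common \<rho> \<and>
     (\<exists>C::real. C \<ge> 1 \<and> (\<forall>f g. meas01 f \<and> meas01 g \<longrightarrow>
        \<rho> (\<lambda>t. f t + g t) \<le> ennreal C * (\<rho> f + \<rho> g)))"

definition equiv_norms :: "((real \<Rightarrow> ennreal) \<Rightarrow> ennreal) \<Rightarrow> ((real \<Rightarrow> ennreal) \<Rightarrow> ennreal) \<Rightarrow> bool" where
  "equiv_norms \<rho> \<sigma> \<longleftrightarrow> (\<exists>c C::real. 0 < c \<and> 0 < C \<and>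
     (\<forall>f. meas01 f \<longrightarrow> ennreal c * \<sigma> f \<le> \<rho> f \<and> \<rho> f \<le> ennreal C * \<sigma> f))"

end

theory Submission
  imports Defs
begin

text \<open>
  Since f* is nonincreasing, S_I f is a nonincreasing majorant of f*, so (S_I f)* \<le> S_I f and
  S_I (S_I f) \<le> S_I f: the operator S_I is a pointwise contraction on Z. The axioms of an r.i. norm
  pass from X to Z because f \<mapsto> S_I f is positively homogeneous, monotone, continuous along
  increasing sequences and invariant under rearrangement. Only the triangle inequality is lost:
  from (f + g)*(s) \<le> f*(s/2) + g*(s/2) and I(s) \<le> C I(s/2) one gets
  S_I (f + g) \<le> C (S_I f + S_I g).

  Under the integrability condition on 1/I, replace f* by the maximal function
  f**(s) = (1/s) \<integral>_0^s f*, which is subadditive in f. Then f* \<le> f** gives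
  S_I f \<le> S_I f**, while f*(u) \<le> M(s)/I(u) for u < s, with M(s) = sup_{u \<le> s} I(u) f*(u),
  gives I(s) f**(s) \<le> C M(s), i.e. S_I f** \<le> C S_I f. Hence f \<mapsto> X (S_I f**) is an r.i. norm
  equivalent to the quasi-norm of Z.
\<close>

lemma ennreal_divide_le_iff:
  assumes "0 < c"
  shows "x / ennreal c \<le> y \<longleftrightarrow> x \<le> y * ennreal c"
proof
  assume "x / ennreal c \<le> y"
  then have "x / ennreal c * ennreal c \<le> y * ennreal c"
    by (rule mult_right_mono) simp
  then show "x \<le> y * ennreal c"
    using assms by (simp add: ennreal_divide_times)
next
  assume "x \<le> y * ennreal c"
  then show "x / ennreal c \<le> y"
    using assms by (intro divide_le_posI_ennreal) (simp_all add: mult.commute)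
qed

lemma ennreal_le_divide_iff: "0 < c \<Longrightarrow> y \<le> x / ennreal c \<longleftrightarrow> y * ennreal c \<le> x"
  using divide_less_ennreal[of "ennreal c" x y] by (auto simp: not_less[symmetric])

lemma ennreal_mult_divide_cancel: "0 < c \<Longrightarrow> ennreal c * (x / ennreal c) = x"
  by (simp add: ennreal_times_divide mult.commute mult_divide_eq_ennreal)

section \<open>Distribution function and nonincreasing rearrangement\<close>

lemma meas01_if_superlevel_intervals:
  fixes g :: "real \<Rightarrow> ennreal"
  assumes "\<And>y. is_interval {t \<in> unitI. y < g t}"
  shows "meas01 g"
  unfolding meas01_def
proof (rule borel_measurableI_greater)
  fix y
  have "convex {t \<in> unitI. y < g t}"
    using assms is_interval_convex_1 by blast
  moreover have "bounded {t \<in> unitI. y < g t}"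
    by (rule bounded_subset[of unitI]) auto
  ultimately have "{t \<in> unitI. y < g t} \<in> sets lebesgue"
    by (simp add: measurable_convex fmeasurableD)
  then show "{t \<in> space (lebesgue_on unitI). y < g t} \<in> sets (lebesgue_on unitI)"
    by (subst sets_restrict_space_iff) auto
qed

lemma meas01_antimono_on:
  fixes g :: "real \<Rightarrow> ennreal"
  assumes "antimono_on unitI g"
  shows "meas01 g"
proof (rule meas01_if_superlevel_intervals)
  fix y
  show "is_interval {t \<in> unitI. y < g t}"
    unfolding is_interval_1
    using monotone_onD[OF assms] by simp (meson greaterThanLessThan_iff le_less_trans less_le_trans)
qed

lemma meas01_mono_on:
  fixes g :: "real \<Rightarrow> ennreal"
  assumes "mono_on unitI g"
  shows "meas01 g"
proof (rule meas01_if_superlevel_intervals)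
  fix y
  show "is_interval {t \<in> unitI. y < g t}"
    unfolding is_interval_1
    using monotone_onD[OF assms] by simp (meson greaterThanLessThan_iff le_less_trans less_le_trans)
qed

lemma meas01_cmult: "meas01 f \<Longrightarrow> meas01 (\<lambda>t. c * f t)"
  unfolding meas01_def by measurable

lemma meas01_add: "meas01 f \<Longrightarrow> meas01 g \<Longrightarrow> meas01 (\<lambda>t. f t + g t)"
  unfolding meas01_def by measurable

lemma meas01_diff: "meas01 f \<Longrightarrow> meas01 (\<lambda>t. f t - c)"
  unfolding meas01_def by (intro borel_measurable_minus_ennreal) auto

lemma meas01_indicator: "meas01 (indicator unitI)"
  unfolding meas01_def by (intro borel_measurable_indicator) auto

lemma sets_superlevel:
  assumes "meas01 f"
  shows "{t \<in> unitI. y < f t} \<in> sets lebesgue"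
proof -
  have "f -` {y<..} \<inter> space (lebesgue_on unitI) \<in> sets (lebesgue_on unitI)"
    using assms unfolding meas01_def by (intro measurable_sets) auto
  moreover have "f -` {y<..} \<inter> space (lebesgue_on unitI) = {t \<in> unitI. y < f t}"
    by auto
  ultimately show ?thesis
    by (simp add: sets_restrict_space_iff)
qed

lemma distrib_fun_le_1: "distrib_fun f y \<le> 1"
proof -
  have "distrib_fun f y \<le> emeasure lebesgue unitI"
    unfolding distrib_fun_def by (rule emeasure_mono) auto
  then show ?thesis by simp
qed

lemma distrib_fun_top [simp]: "distrib_fun f top = 0"
  by (simp add: distrib_fun_def)

lemma distrib_fun_antimono:
  assumes "meas01 f" "y \<le> y'"
  shows "distrib_fun f y' \<le> distrib_fun f y"
  unfolding distrib_fun_def using assms sets_superlevel[OF assms(1)]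
  by (intro emeasure_mono) auto

lemma superlevel_eq_UN:
  fixes f :: "'a \<Rightarrow> ennreal"
  shows "{t \<in> A. y < f t} = (\<Union>n. {t \<in> A. y + ennreal (inverse (Suc n)) < f t})"
proof (intro equalityI subsetI)
  fix t assume t: "t \<in> {t \<in> A. y < f t}"
  have "(\<lambda>n. ennreal (inverse (Suc n))) \<longlonglongrightarrow> ennreal 0"
    by (intro tendsto_ennrealI LIMSEQ_inverse_real_of_nat)
  then have "(\<lambda>n. y + ennreal (inverse (Suc n))) \<longlonglongrightarrow> y + ennreal 0"
    by (intro tendsto_add tendsto_const)
  then have "(\<lambda>n. y + ennreal (inverse (Suc n))) \<longlonglongrightarrow> y"
    by simp
  then obtain n where "y + ennreal (inverse (Suc n)) < f t"
    using order_tendstoD(2) t by (fastforce simp: eventually_sequentially)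
  then show "t \<in> (\<Union>n. {t \<in> A. y + ennreal (inverse (Suc n)) < f t})"
    using t by auto
qed (auto intro: le_less_trans[rotated] add_increasing2)

lemma distrib_fun_right_continuous:
  assumes f: "meas01 f"
  shows "distrib_fun f y = (SUP n. distrib_fun f (y + ennreal (inverse (Suc n))))"
proof -
  define A where "A n = {t \<in> unitI. y + ennreal (inverse (Suc n)) < f t}" for n
  have "distrib_fun f y = emeasure lebesgue (\<Union>n. A n)"
    unfolding distrib_fun_def A_def by (simp only: superlevel_eq_UN[of unitI y f])
  also have "\<dots> = (SUP n. emeasure lebesgue (A n))"
  proof (rule SUP_emeasure_incseq[symmetric])
    have "A n \<in> sets lebesgue" for n
      unfolding A_def by (rule sets_superlevel[OF f])
    then show "range A \<subseteq> sets lebesgue"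
      by auto
    show "incseq A"
    proof (rule incseq_SucI)
      fix n
      have "ennreal (inverse (Suc (Suc n))) \<le> ennreal (inverse (Suc n))"
        by (intro ennreal_leI) (simp add: field_simps)
      then show "A n \<subseteq> A (Suc n)"
        unfolding A_def by (auto intro: le_less_trans[rotated] add_left_mono)
    qed
  qed
  finally show ?thesis
    unfolding A_def distrib_fun_def .
qed

lemma rearr_antimono: "s \<le> s' \<Longrightarrow> rearr f s' \<le> rearr f s"
  unfolding rearr_def
  by (rule Inf_superset_mono) (auto intro: order_trans ennreal_leI)

lemma distrib_fun_rearr_le:
  assumes f: "meas01 f"
  shows "distrib_fun f (rearr f s) \<le> ennreal s"
proof -
  have "distrib_fun f (rearr f s + ennreal (inverse (Suc n))) \<le> ennreal s" for n
  proof (cases "rearr f s = \<infinity>")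
    case False
    then have "Inf {y. distrib_fun f y \<le> ennreal s} < rearr f s + ennreal (inverse (Suc n))"
      unfolding rearr_def by simp
    then obtain z where "distrib_fun f z \<le> ennreal s" "z < rearr f s + ennreal (inverse (Suc n))"
      by (auto simp: Inf_less_iff)
    then show ?thesis
      using distrib_fun_antimono[OF f] by (meson less_imp_le order_trans)
  qed simp
  then show ?thesis
    by (subst distrib_fun_right_continuous[OF f]) (rule SUP_least)
qed

lemma rearr_le_iff:
  assumes f: "meas01 f"
  shows "rearr f s \<le> y \<longleftrightarrow> distrib_fun f y \<le> ennreal s"
proof
  assume "rearr f s \<le> y"
  then show "distrib_fun f y \<le> ennreal s"
    using distrib_fun_antimono[OF f] distrib_fun_rearr_le[OF f, of s] order_trans by blast
next
  assume "distrib_fun f y \<le> ennreal s"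
  then show "rearr f s \<le> y"
    unfolding rearr_def by (auto intro: Inf_lower)
qed

lemma less_rearr_iff: "meas01 f \<Longrightarrow> y < rearr f s \<longleftrightarrow> ennreal s < distrib_fun f y"
  using rearr_le_iff by (meson not_le)

lemma meas01_rearr: "meas01 (rearr f)"
  by (rule meas01_antimono_on) (auto intro: monotone_onI rearr_antimono)

lemma distrib_fun_rearr:
  assumes f: "meas01 f"
  shows "distrib_fun (rearr f) y = distrib_fun f y"
proof -
  obtain r where r: "distrib_fun f y = ennreal r" "0 \<le> r" "r \<le> 1"
    using distrib_fun_le_1[of f y]
    by (cases "distrib_fun f y") (auto simp: top_unique)
  have "{t \<in> unitI. y < rearr f t} = {0<..<r}"
    using r by (auto simp: less_rearr_iff[OF f] ennreal_less_iff)
  then have "distrib_fun (rearr f) y = emeasure lebesgue {0<..<r}"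
    unfolding distrib_fun_def by simp
  then show ?thesis
    using r by simp
qed

lemma rearr_rearr:
  assumes f: "meas01 f"
  shows "rearr (rearr f) = rearr f"
proof
  fix t
  have "rearr (rearr f) t = Inf {y. distrib_fun (rearr f) y \<le> ennreal t}"
    by (rule rearr_def)
  also have "\<dots> = rearr f t"
    by (simp only: distrib_fun_rearr[OF f] rearr_def)
  finally show "rearr (rearr f) t = rearr f t" .
qed

lemma distrib_fun_mono_AE:
  assumes f: "meas01 f" and le: "AE t in lebesgue_on unitI. g t \<le> f t"
  shows "distrib_fun g y \<le> distrib_fun f y"
proof -
  have "AE t in lebesgue. t \<in> unitI \<longrightarrow> g t \<le> f t"
    using le by (subst (asm) AE_restrict_space_iff) auto
  then have "AE t in lebesgue. t \<in> {t \<in> unitI. y < g t} \<longrightarrow> t \<in> {t \<in> unitI. y < f t}"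
    by eventually_elim (auto intro: less_le_trans)
  then show ?thesis
    unfolding distrib_fun_def by (rule emeasure_mono_AE) (rule sets_superlevel[OF f])
qed

lemma rearr_mono_AE:
  assumes f: "meas01 f" and g: "meas01 g" and le: "AE t in lebesgue_on unitI. g t \<le> f t"
  shows "rearr g s \<le> rearr f s"
  unfolding rearr_le_iff[OF g]
  using distrib_fun_mono_AE[OF f le] distrib_fun_rearr_le[OF f] by (rule order_trans)

lemma rearr_cmult:
  assumes f: "meas01 f" and a: "0 \<le> a"
  shows "rearr (\<lambda>t. ennreal a * f t) s = ennreal a * rearr f s"
proof (cases "a = 0")
  case True
  have "distrib_fun (\<lambda>t. 0) 0 = 0"
    unfolding distrib_fun_def by simp
  then have "rearr (\<lambda>t. 0) s \<le> 0"
    unfolding rearr_def by (intro Inf_lower) simp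
  then show ?thesis
    using True by simp
next
  case False
  then have a0: "ennreal a \<noteq> 0" "ennreal a < top"
    using a by auto
  have af: "meas01 (\<lambda>t. ennreal a * f t)"
    by (rule meas01_cmult[OF f])
  have distrib: "distrib_fun (\<lambda>t. ennreal a * f t) z = distrib_fun f (z / ennreal a)" for z
    unfolding distrib_fun_def using divide_less_ennreal[OF a0, of z]
    by (simp add: mult.commute)
  have iff: "rearr (\<lambda>t. ennreal a * f t) s \<le> z \<longleftrightarrow> ennreal a * rearr f s \<le> z" for z
  proof -
    have "rearr (\<lambda>t. ennreal a * f t) s \<le> z \<longleftrightarrow> rearr f s \<le> z / ennreal a"
      unfolding rearr_le_iff[OF af] rearr_le_iff[OF f] distrib ..
    also have "\<dots> \<longleftrightarrow> ennreal a * rearr f s \<le> z"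
      using divide_less_ennreal[OF a0, of z "rearr f s"] by (auto simp: not_less[symmetric] mult.commute)
    finally show ?thesis .
  qed
  show ?thesis
    using iff[of "rearr (\<lambda>t. ennreal a * f t) s"] iff[of "ennreal a * rearr f s"]
    by (simp add: order.antisym)
qed

lemma rearr_add:
  assumes f: "meas01 f" and g: "meas01 g" and s: "0 \<le> s"
  shows "rearr (\<lambda>t. f t + g t) s \<le> rearr f (s/2) + rearr g (s/2)"
proof -
  let ?a = "rearr f (s/2)" and ?b = "rearr g (s/2)"
  have "{t \<in> unitI. ?a + ?b < f t + g t} \<subseteq> {t \<in> unitI. ?a < f t} \<union> {t \<in> unitI. ?b < g t}"
    using add_mono[of "f _" ?a "g _" ?b] by (auto simp: not_less[symmetric])
  then have "distrib_fun (\<lambda>t. f t + g t) (?a + ?b)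
      \<le> emeasure lebesgue ({t \<in> unitI. ?a < f t} \<union> {t \<in> unitI. ?b < g t})"
    unfolding distrib_fun_def using sets_superlevel[OF f] sets_superlevel[OF g]
    by (intro emeasure_mono) auto
  also have "\<dots> \<le> distrib_fun f ?a + distrib_fun g ?b"
    unfolding distrib_fun_def using sets_superlevel[OF f] sets_superlevel[OF g]
    by (intro emeasure_subadditive) auto
  also have "\<dots> \<le> ennreal (s/2) + ennreal (s/2)"
    by (intro add_mono distrib_fun_rearr_le f g)
  also have "\<dots> = ennreal s"
    using s by (simp flip: ennreal_plus)
  finally show ?thesis
    unfolding rearr_le_iff[OF meas01_add[OF f g]] .
qed

lemma AE_incseq_le:
  assumes "AE t in M. incseq (\<lambda>n. F n t) \<and> (\<lambda>n. F n t) \<longlonglongrightarrow> f t" "n \<le> m"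
  shows "AE t in M. F n t \<le> F m t"
  using assms(1) by eventually_elim (use assms(2) in \<open>auto simp: incseq_def\<close>)

lemma distrib_fun_le_SUP:
  assumes F: "\<And>n. meas01 (F n)"
    and conv: "AE t in lebesgue_on unitI. incseq (\<lambda>n. F n t) \<and> (\<lambda>n. F n t) \<longlonglongrightarrow> f t"
  shows "distrib_fun f y \<le> (SUP n. distrib_fun (F n) y)"
proof -
  define A where "A n = {t \<in> unitI. y < F n t}" for n
  define B where "B n = (\<Union>m\<le>n. A m)" for n
  have A_sets: "A n \<in> sets lebesgue" for n
    unfolding A_def by (rule sets_superlevel[OF F])
  then have B_sets: "range B \<subseteq> sets lebesgue"
    unfolding B_def by auto
  have conv': "AE t in lebesgue. t \<in> unitI \<longrightarrow> incseq (\<lambda>n. F n t) \<and> (\<lambda>n. F n t) \<longlonglongrightarrow> f t"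
    using conv by (subst (asm) AE_restrict_space_iff) auto
  then have "AE t in lebesgue. t \<in> {t \<in> unitI. y < f t} \<longrightarrow> t \<in> (\<Union>n. B n)"
  proof eventually_elim
    case (elim t)
    show ?case
    proof
      assume t: "t \<in> {t \<in> unitI. y < f t}"
      then obtain n where "y < F n t"
        using elim order_tendstoD(1) by (fastforce simp: eventually_sequentially)
      then show "t \<in> (\<Union>n. B n)"
        using t unfolding B_def A_def by auto
    qed
  qed
  then have "distrib_fun f y \<le> emeasure lebesgue (\<Union>n. B n)"
    unfolding distrib_fun_def by (rule emeasure_mono_AE) (use B_sets in auto)
  also have "\<dots> = (SUP n. emeasure lebesgue (B n))"
    using B_sets by (intro SUP_emeasure_incseq[symmetric]) (auto simp: B_def incseq_def intro: order_trans)
  also have "\<dots> \<le> (SUP n. distrib_fun (F n) y)"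
  proof (rule SUP_mono)
    fix n
    have "AE t in lebesgue. t \<in> B n \<longrightarrow> t \<in> A n"
      using conv' by eventually_elim (auto simp: A_def B_def incseq_def intro: less_le_trans)
    then have "emeasure lebesgue (B n) \<le> distrib_fun (F n) y"
      unfolding distrib_fun_def A_def[symmetric] by (rule emeasure_mono_AE) (rule A_sets)
    then show "\<exists>m\<in>UNIV. emeasure lebesgue (B n) \<le> distrib_fun (F m) y"
      by blast
  qed
  finally show ?thesis .
qed

lemma rearr_SUP:
  assumes F: "\<And>n. meas01 (F n)" and f: "meas01 f"
    and conv: "AE t in lebesgue_on unitI. incseq (\<lambda>n. F n t) \<and> (\<lambda>n. F n t) \<longlonglongrightarrow> f t"
  shows "rearr f s = (SUP n. rearr (F n) s)"
proof (rule order.antisym)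
  show "rearr f s \<le> (SUP n. rearr (F n) s)"
    unfolding rearr_le_iff[OF f]
  proof (rule order_trans[OF distrib_fun_le_SUP[OF F conv]], rule SUP_least)
    fix n
    have "distrib_fun (F n) (SUP n. rearr (F n) s) \<le> distrib_fun (F n) (rearr (F n) s)"
      by (rule distrib_fun_antimono[OF F]) (rule SUP_upper, simp)
    also have "\<dots> \<le> ennreal s"
      by (rule distrib_fun_rearr_le[OF F])
    finally show "distrib_fun (F n) (SUP n. rearr (F n) s) \<le> ennreal s" .
  qed
  have "AE t in lebesgue_on unitI. F n t \<le> f t" for n
    using conv by eventually_elim (auto intro: incseq_le)
  then show "(SUP n. rearr (F n) s) \<le> rearr f s"
    using rearr_mono_AE[OF f F] by (auto intro: SUP_least)
qed

lemma rearr_le_antimono_on: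
  assumes h: "antimono_on unitI h" and s: "s \<in> unitI"
  shows "rearr h s \<le> h s"
proof -
  have "{u \<in> unitI. h s < h u} \<subseteq> {0<..<s}"
    using s monotone_onD[OF h] by (force simp: not_le[symmetric])
  then have "distrib_fun h (h s) \<le> emeasure lebesgue {0<..<s}"
    unfolding distrib_fun_def by (intro emeasure_mono) auto
  also have "\<dots> = ennreal s"
    using s by simp
  finally show ?thesis
    unfolding rearr_le_iff[OF meas01_antimono_on[OF h]] .
qed

lemma distrib_fun_0_iff:
  assumes f: "meas01 f"
  shows "distrib_fun f 0 = 0 \<longleftrightarrow> (AE t in lebesgue_on unitI. f t = 0)"
proof -
  have "distrib_fun f 0 = 0 \<longleftrightarrow> {t \<in> unitI. 0 < f t} \<in> null_sets lebesgue"
    unfolding distrib_fun_def using sets_superlevel[OF f] by (simp add: null_sets_def)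
  also have "\<dots> \<longleftrightarrow> (AE t in lebesgue. t \<notin> {t \<in> unitI. 0 < f t})"
    by (rule AE_iff_null_sets[OF sets_superlevel[OF f]])
  also have "\<dots> \<longleftrightarrow> (AE t in lebesgue. t \<in> unitI \<longrightarrow> f t = 0)"
    by (rule AE_cong) auto
  also have "\<dots> \<longleftrightarrow> (AE t in lebesgue_on unitI. f t = 0)"
    by (subst AE_restrict_space_iff) auto
  finally show ?thesis .
qed

lemma rearr_eq_0:
  assumes f: "meas01 f" and "AE t in lebesgue_on unitI. f t = 0" and "0 < s"
  shows "rearr f s = 0"
  using assms rearr_le_iff[OF f, of s 0] distrib_fun_0_iff[OF f] by simp

lemma AE_rearr_eq_0_iff:
  assumes f: "meas01 f"
  shows "(AE t in lebesgue_on unitI. rearr f t = 0) \<longleftrightarrow> (AE t in lebesgue_on unitI. f t = 0)"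
  using distrib_fun_0_iff[OF f] distrib_fun_0_iff[OF meas01_rearr, of f]
  by (simp add: distrib_fun_rearr[OF f])

lemma rearr_indicator_le_1: "rearr (indicator unitI) s \<le> 1"
proof -
  have empty: "{t \<in> unitI. (1::ennreal) < indicator unitI t} = {}"
    by (auto simp: indicator_def)
  show ?thesis
    unfolding rearr_le_iff[OF meas01_indicator] distrib_fun_def empty by simp
qed

lemma AE_eq_0_if_rearr_le:
  assumes f: "meas01 f" and le: "\<And>t. t \<in> unitI \<Longrightarrow> rearr f t \<le> g t"
    and g: "AE t in lebesgue_on unitI. g t = 0"
  shows "AE t in lebesgue_on unitI. f t = 0"
proof -
  have "AE t in lebesgue_on unitI. rearr f t = 0"
    using g AE_space
  proof eventually_elim
    case (elim t)
    then show ?case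
      using le[of t] by simp
  qed
  then show ?thesis
    using AE_rearr_eq_0_iff[OF f] by simp
qed

lemma emeasure_distr_greaterThan:
  assumes g: "meas01 g"
  shows "emeasure (distr (lebesgue_on unitI) borel g) {y<..} = distrib_fun g y"
proof -
  have "emeasure (distr (lebesgue_on unitI) borel g) {y<..}
      = emeasure (lebesgue_on unitI) (g -` {y<..} \<inter> unitI)"
    using g unfolding meas01_def by (subst emeasure_distr) auto
  also have "\<dots> = emeasure lebesgue (g -` {y<..} \<inter> unitI)"
    by (rule emeasure_restrict_space) auto
  also have "g -` {y<..} \<inter> unitI = {t \<in> unitI. y < g t}"
    by auto
  finally show ?thesis
    unfolding distrib_fun_def .
qed

lemma distr_rearr:
  assumes h: "meas01 h"
  shows "distr (lebesgue_on unitI) borel (rearr h) = distr (lebesgue_on unitI) borel h"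
proof -
  let ?E = "insert UNIV (range greaterThan) :: ennreal set set"
  have sets_E: "sets (borel :: ennreal measure) = sigma_sets UNIV ?E"
  proof -
    have "sets (borel :: ennreal measure) = sigma_sets UNIV (range greaterThan)"
      by (subst borel_Ioi) (simp add: sets_measure_of)
    also have "\<dots> = sigma_sets UNIV ?E"
      by (rule sigma_sets_eqI) (auto intro: sigma_sets_top)
    finally show ?thesis .
  qed
  have total: "emeasure (distr (lebesgue_on unitI) borel g) UNIV = 1" if "meas01 g" for g
    using that unfolding meas01_def by (subst emeasure_distr) (auto simp: emeasure_restrict_space)
  show ?thesis
  proof (rule measure_eqI_generator_eq[where \<Omega>=UNIV and E="?E" and A="\<lambda>i. UNIV"])
    have "{x<..} \<inter> {y<..} = {max x y<..}" for x y :: ennreal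
      by auto
    then show "Int_stable ?E"
      by (auto simp: Int_stable_def)
    fix X assume "X \<in> ?E"
    then show "emeasure (distr (lebesgue_on unitI) borel (rearr h)) X
        = emeasure (distr (lebesgue_on unitI) borel h) X"
      using total[OF meas01_rearr] total[OF h] distrib_fun_rearr[OF h]
        emeasure_distr_greaterThan[OF meas01_rearr] emeasure_distr_greaterThan[OF h]
      by auto
  qed (use sets_E total[OF meas01_rearr] in auto)
qed

lemma nn_integral_diff_rearr:
  assumes h: "meas01 h"
  shows "(\<integral>\<^sup>+ t\<in>unitI. (h t - y) \<partial>lebesgue) = (\<integral>\<^sup>+ t\<in>unitI. (rearr h t - y) \<partial>lebesgue)"
proof -
  have eq: "(\<integral>\<^sup>+ t\<in>unitI. (g t - y) \<partial>lebesgue) = (\<integral>\<^sup>+ x. (x - y) \<partial>distr (lebesgue_on unitI) borel g)"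
    if g: "meas01 g" for g
  proof -
    have "(\<integral>\<^sup>+ t\<in>unitI. (g t - y) \<partial>lebesgue) = (\<integral>\<^sup>+ t. (g t - y) \<partial>lebesgue_on unitI)"
      by (subst nn_integral_restrict_space) auto
    also have "\<dots> = (\<integral>\<^sup>+ x. (x - y) \<partial>distr (lebesgue_on unitI) borel g)"
      using g unfolding meas01_def by (subst nn_integral_distr) auto
    finally show ?thesis .
  qed
  show ?thesis
    unfolding eq[OF h] eq[OF meas01_rearr] distr_rearr[OF h] ..
qed

section \<open>The maximal function f**\<close>

lemma set_nn_integral_eq_restrict_unitI:
  assumes "A \<subseteq> unitI"
  shows "(\<integral>\<^sup>+u\<in>A. g u \<partial>lebesgue) = (\<integral>\<^sup>+u. g u * indicator A u \<partial>lebesgue_on unitI)"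
proof -
  have "(\<integral>\<^sup>+u. g u * indicator A u \<partial>lebesgue_on unitI)
      = (\<integral>\<^sup>+u. g u * indicator A u * indicator unitI u \<partial>lebesgue)"
    by (rule nn_integral_restrict_space) simp
  also have "\<dots> = (\<integral>\<^sup>+u\<in>A. g u \<partial>lebesgue)"
    using assms by (intro nn_integral_cong) (auto simp: indicator_def)
  finally show ?thesis ..
qed

lemma set_nn_integral_const_add:
  assumes A: "A \<subseteq> unitI" "A \<in> sets lebesgue" and g: "meas01 g"
  shows "(\<integral>\<^sup>+u\<in>A. (c + g u) \<partial>lebesgue) = c * emeasure lebesgue A + (\<integral>\<^sup>+u\<in>A. g u \<partial>lebesgue)"
proof -
  have As: "A \<in> sets (lebesgue_on unitI)"
    using A by (simp add: sets_restrict_space_iff)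
  have "(\<integral>\<^sup>+u\<in>A. (c + g u) \<partial>lebesgue)
      = (\<integral>\<^sup>+u. (c * indicator A u + g u * indicator A u) \<partial>lebesgue_on unitI)"
    unfolding set_nn_integral_eq_restrict_unitI[OF A(1)]
    by (intro nn_integral_cong) (simp add: distrib_right)
  also have "\<dots> = (\<integral>\<^sup>+u. c * indicator A u \<partial>lebesgue_on unitI)
      + (\<integral>\<^sup>+u. g u * indicator A u \<partial>lebesgue_on unitI)"
    using g As unfolding meas01_def by (intro nn_integral_add) auto
  also have "(\<integral>\<^sup>+u. c * indicator A u \<partial>lebesgue_on unitI) = c * emeasure lebesgue A"
    using As A by (simp add: nn_integral_cmult_indicator emeasure_restrict_space)
  finally show ?thesis
    unfolding set_nn_integral_eq_restrict_unitI[OF A(1)] .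
qed

lemma ennreal_diff_add_le: "((x::ennreal) + z) - (a + b) \<le> (x - a) + (z - b)"
proof -
  have "x + z \<le> (a + (x - a)) + (b + (z - b))"
    by (intro add_mono) (auto simp: add_diff_self_ennreal)
  then show ?thesis
    by (auto simp: ennreal_minus_le_iff add_ac)
qed

definition rearr_int :: "(real \<Rightarrow> ennreal) \<Rightarrow> real \<Rightarrow> ennreal" where
  "rearr_int f s = (\<integral>\<^sup>+ u\<in>{0<..<s}. rearr f u \<partial>lebesgue)"

definition rearr_avg :: "(real \<Rightarrow> ennreal) \<Rightarrow> real \<Rightarrow> ennreal" where
  "rearr_avg f s = rearr_int f s / ennreal s"

text \<open>rearr_int f s = min_y (s y + \<integral> (f - y)+), the minimum being attained at y = rearr f s;
  this exhibits the subadditivity of f \<mapsto> rearr_int f s.\<close>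
lemma rearr_int_le:
  assumes h: "meas01 h" and s: "s \<in> unitI"
  shows "rearr_int h s \<le> ennreal s * y + (\<integral>\<^sup>+ t\<in>unitI. (h t - y) \<partial>lebesgue)"
proof -
  have A: "{0<..<s} \<subseteq> unitI" "{0<..<s} \<in> sets lebesgue"
    using s by auto
  have "rearr_int h s \<le> (\<integral>\<^sup>+ u\<in>{0<..<s}. (y + (rearr h u - y)) \<partial>lebesgue)"
    unfolding rearr_int_def
    by (intro nn_integral_mono mult_right_mono) (auto simp: add_diff_self_ennreal)
  also have "\<dots> = y * emeasure lebesgue {0<..<s} + (\<integral>\<^sup>+ u\<in>{0<..<s}. (rearr h u - y) \<partial>lebesgue)"
    by (rule set_nn_integral_const_add[OF A meas01_diff[OF meas01_rearr]])
  also have "\<dots> \<le> ennreal s * y + (\<integral>\<^sup>+ u\<in>unitI. (rearr h u - y) \<partial>lebesgue)"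
    using s by (auto simp: mult.commute intro!: add_mono nn_integral_mono mult_left_mono
        split: split_indicator)
  also have "\<dots> = ennreal s * y + (\<integral>\<^sup>+ t\<in>unitI. (h t - y) \<partial>lebesgue)"
    by (simp add: nn_integral_diff_rearr[OF h])
  finally show ?thesis .
qed

lemma rearr_int_top:
  assumes "rearr h s = top" and "0 < s"
  shows "rearr_int h s = top"
proof -
  have "top * emeasure lebesgue {0<..<s} \<le> rearr_int h s"
    unfolding rearr_int_def using assms rearr_antimono[of _ s h]
    by (subst nn_integral_cmult_indicator[symmetric])
       (auto intro!: nn_integral_mono simp: top_unique split: split_indicator)
  then show ?thesis
    using assms by (simp add: top_unique ennreal_mult_top)
qed

lemma rearr_int_eq:
  assumes h: "meas01 h" and s: "s \<in> unitI"
  shows "ennreal s * rearr h s + (\<integral>\<^sup>+ t\<in>unitI. (h t - rearr h s) \<partial>lebesgue) = rearr_int h s"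
proof (cases "rearr h s = top")
  case True
  then show ?thesis
    using s rearr_int_top[OF True] by (simp add: ennreal_mult_top)
next
  case False
  let ?y = "rearr h s"
  have A: "{0<..<s} \<subseteq> unitI" "{0<..<s} \<in> sets lebesgue"
    using s by auto
  have "(\<integral>\<^sup>+ t\<in>unitI. (h t - ?y) \<partial>lebesgue) = (\<integral>\<^sup>+ t\<in>unitI. (rearr h t - ?y) \<partial>lebesgue)"
    by (rule nn_integral_diff_rearr[OF h])
  also have "\<dots> = (\<integral>\<^sup>+ t\<in>{0<..<s}. (rearr h t - ?y) \<partial>lebesgue)"
  proof (intro nn_integral_cong)
    fix t
    have "rearr h t - ?y = 0" if "s \<le> t"
      using rearr_antimono[OF that, of h] False by (simp add: diff_eq_0_iff_ennreal top.not_eq_extremum)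
    then show "(rearr h t - ?y) * indicator unitI t = (rearr h t - ?y) * indicator {0<..<s} t"
      using s by (auto split: split_indicator)
  qed
  finally have tail: "(\<integral>\<^sup>+ t\<in>unitI. (h t - ?y) \<partial>lebesgue)
      = (\<integral>\<^sup>+ t\<in>{0<..<s}. (rearr h t - ?y) \<partial>lebesgue)" .
  have "rearr_int h s = (\<integral>\<^sup>+ u\<in>{0<..<s}. (?y + (rearr h u - ?y)) \<partial>lebesgue)"
    unfolding rearr_int_def
    by (intro nn_integral_cong) (auto simp: add_diff_self_ennreal rearr_antimono split: split_indicator)
  also have "\<dots> = ?y * emeasure lebesgue {0<..<s} + (\<integral>\<^sup>+ u\<in>{0<..<s}. (rearr h u - ?y) \<partial>lebesgue)"
    by (rule set_nn_integral_const_add[OF A meas01_diff[OF meas01_rearr]])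
  finally show ?thesis
    using s tail by (simp add: mult.commute)
qed

lemma rearr_int_add:
  assumes f: "meas01 f" and g: "meas01 g" and s: "s \<in> unitI"
  shows "rearr_int (\<lambda>t. f t + g t) s \<le> rearr_int f s + rearr_int g s"
proof -
  let ?a = "rearr f s" and ?b = "rearr g s"
  let ?F = "\<integral>\<^sup>+ t\<in>unitI. (f t - ?a) \<partial>lebesgue" and ?G = "\<integral>\<^sup>+ t\<in>unitI. (g t - ?b) \<partial>lebesgue"
  have "rearr_int (\<lambda>t. f t + g t) s
      \<le> ennreal s * (?a + ?b) + (\<integral>\<^sup>+ t\<in>unitI. ((f t + g t) - (?a + ?b)) \<partial>lebesgue)"
    by (rule rearr_int_le[OF meas01_add[OF f g] s])
  also have "\<dots> \<le> ennreal s * (?a + ?b) + (\<integral>\<^sup>+ t\<in>unitI. ((f t - ?a) + (g t - ?b)) \<partial>lebesgue)"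
    by (intro add_left_mono nn_integral_mono mult_right_mono ennreal_diff_add_le) auto
  also have "(\<integral>\<^sup>+ t\<in>unitI. ((f t - ?a) + (g t - ?b)) \<partial>lebesgue) = ?F + ?G"
    unfolding set_nn_integral_eq_restrict_unitI[OF order_refl]
    using meas01_diff[OF f, of ?a] meas01_diff[OF g, of ?b] unfolding meas01_def
    by (subst nn_integral_add[symmetric])
       (auto simp: distrib_right intro!: nn_integral_cong borel_measurable_times_ennreal borel_measurable_indicator)
  also have "ennreal s * (?a + ?b) + (?F + ?G) = (ennreal s * ?a + ?F) + (ennreal s * ?b + ?G)"
    by (simp add: algebra_simps)
  also have "\<dots> = rearr_int f s + rearr_int g s"
    using rearr_int_eq[OF f s] rearr_int_eq[OF g s] by simp
  finally show ?thesis .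
qed

lemma rearr_avg_add:
  assumes "meas01 f" "meas01 g" "s \<in> unitI"
  shows "rearr_avg (\<lambda>t. f t + g t) s \<le> rearr_avg f s + rearr_avg g s"
  unfolding rearr_avg_def add_divide_distrib_ennreal[symmetric]
  by (intro divide_right_mono_ennreal rearr_int_add assms)

lemma rearr_int_cmult:
  assumes f: "meas01 f" and a: "0 \<le> a" and s: "s \<in> unitI"
  shows "rearr_int (\<lambda>t. ennreal a * f t) s = ennreal a * rearr_int f s"
proof -
  have A: "{0<..<s} \<subseteq> unitI"
    using s by auto
  then have "{0<..<s} \<in> sets (lebesgue_on unitI)"
    by (simp add: sets_restrict_space_iff)
  then have "(\<integral>\<^sup>+u. ennreal a * (rearr f u * indicator {0<..<s} u) \<partial>lebesgue_on unitI)
      = ennreal a * (\<integral>\<^sup>+u. rearr f u * indicator {0<..<s} u \<partial>lebesgue_on unitI)"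
    using meas01_rearr[of f] unfolding meas01_def
    by (intro nn_integral_cmult) (auto intro!: borel_measurable_times_ennreal borel_measurable_indicator)
  then show ?thesis
    unfolding rearr_int_def set_nn_integral_eq_restrict_unitI[OF A] rearr_cmult[OF f a]
    by (simp add: mult.assoc)
qed

lemma rearr_int_mono_AE:
  assumes "meas01 f" "meas01 g" "AE t in lebesgue_on unitI. g t \<le> f t"
  shows "rearr_int g s \<le> rearr_int f s"
  unfolding rearr_int_def
  by (intro nn_integral_mono mult_right_mono rearr_mono_AE[OF assms]) auto

lemma rearr_int_SUP:
  assumes F: "\<And>n. meas01 (F n)" and f: "meas01 f"
    and conv: "AE t in lebesgue_on unitI. incseq (\<lambda>n. F n t) \<and> (\<lambda>n. F n t) \<longlonglongrightarrow> f t"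
    and s: "s \<in> unitI"
  shows "rearr_int f s = (SUP n. rearr_int (F n) s)"
proof -
  have A: "{0<..<s} \<subseteq> unitI"
    using s by auto
  then have As: "{0<..<s} \<in> sets (lebesgue_on unitI)"
    by (simp add: sets_restrict_space_iff)
  have "incseq (\<lambda>n u. rearr (F n) u * indicator {0<..<s} u)"
    using AE_incseq_le[OF conv]
    by (auto simp: incseq_def le_fun_def intro!: mult_right_mono rearr_mono_AE F)
  then have "(\<integral>\<^sup>+u. (SUP n. rearr (F n) u * indicator {0<..<s} u) \<partial>lebesgue_on unitI)
      = (SUP n. \<integral>\<^sup>+u. rearr (F n) u * indicator {0<..<s} u \<partial>lebesgue_on unitI)"
    using meas01_rearr As unfolding meas01_def
    by (intro nn_integral_monotone_convergence_SUP) (auto intro!: borel_measurable_times_ennreal borel_measurable_indicator)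
  then show ?thesis
    unfolding rearr_int_def set_nn_integral_eq_restrict_unitI[OF A] rearr_SUP[OF F f conv]
    by (simp add: SUP_mult_right_ennreal)
qed

lemma rearr_le_rearr_avg:
  assumes "0 < s"
  shows "rearr f s \<le> rearr_avg f s"
proof -
  have "rearr f s * emeasure lebesgue {0<..<s} \<le> rearr_int f s"
    unfolding rearr_int_def
    by (subst nn_integral_cmult_indicator[symmetric])
       (auto intro!: nn_integral_mono rearr_antimono split: split_indicator)
  then show ?thesis
    unfolding rearr_avg_def using assms by (simp add: ennreal_le_divide_iff)
qed

lemma rearr_avg_rearr: "meas01 f \<Longrightarrow> rearr_avg (rearr f) = rearr_avg f"
  by (simp add: fun_eq_iff rearr_avg_def rearr_int_def rearr_rearr)

lemma rearr_avg_eq_0: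
  assumes f: "meas01 f" and "AE t in lebesgue_on unitI. f t = 0"
  shows "rearr_avg f s = 0"
proof -
  have "rearr_int f s = (\<integral>\<^sup>+(u::real). 0 \<partial>lebesgue)"
    unfolding rearr_int_def using rearr_eq_0[OF assms]
    by (intro nn_integral_cong) (auto split: split_indicator)
  then show ?thesis
    by (simp add: rearr_avg_def)
qed

lemma rearr_avg_le_const:
  assumes "\<And>u. 0 < u \<Longrightarrow> rearr f u \<le> c" and s: "0 < s"
  shows "rearr_avg f s \<le> c"
proof -
  have "rearr_int f s \<le> c * emeasure lebesgue {0<..<s}"
    unfolding rearr_int_def using assms
    by (subst nn_integral_cmult_indicator[symmetric])
       (auto intro!: nn_integral_mono split: split_indicator)
  then show ?thesis
    unfolding rearr_avg_def using s by (intro divide_le_posI_ennreal) (simp_all add: mult.commute)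
qed

section \<open>The weighted supremum operator\<close>

definition weighted_sup :: "(real \<Rightarrow> real) \<Rightarrow> (real \<Rightarrow> ennreal) \<Rightarrow> real \<Rightarrow> ennreal" where
  "weighted_sup I h t = (SUP s\<in>{0<..t}. ennreal (I s) * h s) / ennreal (I t)"

lemma S_op_eq_weighted_sup: "S_op I f = weighted_sup I (rearr f)"
  by (simp add: S_op_def weighted_sup_def fun_eq_iff)

lemma weighted_sup_mono:
  assumes "\<And>s. s \<in> {0<..t} \<Longrightarrow> h s \<le> h' s"
  shows "weighted_sup I h t \<le> weighted_sup I h' t"
  unfolding weighted_sup_def using assms
  by (intro divide_right_mono_ennreal SUP_subset_mono order_refl mult_left_mono) auto

lemma weighted_sup_cong:
  "(\<And>s. s \<in> {0<..t} \<Longrightarrow> h s = h' s) \<Longrightarrow> weighted_sup I h t = weighted_sup I h' t"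
  by (simp add: weighted_sup_def)

lemma weighted_sup_cmult: "weighted_sup I (\<lambda>s. c * h s) t = c * weighted_sup I h t"
  unfolding weighted_sup_def
  by (simp add: SUP_mult_left_ennreal[symmetric] ennreal_times_divide mult.left_commute)

lemma weighted_sup_SUP: "weighted_sup I (\<lambda>s. SUP n. H n s) t = (SUP n. weighted_sup I (H n) t)"
  unfolding weighted_sup_def
  by (simp add: SUP_mult_left_ennreal SUP_divide_ennreal) (subst SUP_commute, rule refl)

lemma weighted_sup_add: "weighted_sup I (\<lambda>s. h s + g s) t \<le> weighted_sup I h t + weighted_sup I g t"
  unfolding weighted_sup_def add_divide_distrib_ennreal[symmetric]
  by (intro divide_right_mono_ennreal SUP_least)
     (auto simp: distrib_left intro!: add_mono SUP_upper)

lemma weighted_sup_eq_0: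
  assumes "\<And>s. s \<in> {0<..t} \<Longrightarrow> h s = 0"
  shows "weighted_sup I h t = 0"
proof -
  have "(SUP s\<in>{0<..t}. ennreal (I s) * h s) \<le> 0"
    using assms by (intro SUP_least) simp
  then show ?thesis
    by (simp add: weighted_sup_def)
qed

locale weight =
  fixes I :: "real \<Rightarrow> real"
  assumes pos: "\<And>t. t \<in> unitI \<Longrightarrow> 0 < I t"
    and mono: "mono_on unitI I"
begin

lemma mono_le: "s \<in> unitI \<Longrightarrow> t \<in> unitI \<Longrightarrow> s \<le> t \<Longrightarrow> I s \<le> I t"
  using mono by (rule monotone_onD)

lemma mult_weighted_sup:
  "t \<in> unitI \<Longrightarrow> ennreal (I t) * weighted_sup I h t = (SUP s\<in>{0<..t}. ennreal (I s) * h s)"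
  unfolding weighted_sup_def by (rule ennreal_mult_divide_cancel[OF pos])

lemma le_weighted_sup:
  assumes "t \<in> unitI"
  shows "h t \<le> weighted_sup I h t"
  unfolding weighted_sup_def using assms pos[OF assms]
  by (subst ennreal_le_divide_iff) (auto simp: mult.commute intro!: SUP_upper)

lemma weighted_sup_le_const:
  assumes t: "t \<in> unitI" and h: "\<And>s. s \<in> {0<..t} \<Longrightarrow> h s \<le> c"
  shows "weighted_sup I h t \<le> c"
  unfolding weighted_sup_def ennreal_divide_le_iff[OF pos[OF t]]
proof (rule SUP_least)
  fix s assume s: "s \<in> {0<..t}"
  then have "I s \<le> I t"
    using t by (intro mono_le) auto
  then show "ennreal (I s) * h s \<le> c * ennreal (I t)"
    using h[OF s] by (subst mult.commute) (intro mult_mono ennreal_leI, auto)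
qed

lemma meas01_weighted_sup: "meas01 (weighted_sup I h)"
proof -
  have "meas01 (\<lambda>t. SUP s\<in>{0<..t}. ennreal (I s) * h s)"
    by (rule meas01_mono_on) (auto intro!: monotone_onI SUP_subset_mono)
  moreover have "meas01 (\<lambda>t. ennreal (I t))"
    by (rule meas01_mono_on) (auto intro!: monotone_onI ennreal_leI mono_le)
  ultimately show ?thesis
    unfolding meas01_def weighted_sup_def[abs_def] by (intro borel_measurable_divide_ennreal)
qed

lemma weighted_sup_antimono:
  assumes h: "antimono_on unitI h"
  shows "antimono_on unitI (weighted_sup I h)"
proof (rule monotone_onI)
  fix s t assume s: "s \<in> unitI" and t: "t \<in> unitI" and "s \<le> t"
  have "(SUP u\<in>{0<..t}. ennreal (I u) * h u) \<le> ennreal (I t) * weighted_sup I h s"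
  proof (rule SUP_least)
    fix u assume u: "u \<in> {0<..t}"
    show "ennreal (I u) * h u \<le> ennreal (I t) * weighted_sup I h s"
    proof (cases "u \<le> s")
      case True
      have "ennreal (I u) * h u \<le> ennreal (I s) * weighted_sup I h s"
        unfolding mult_weighted_sup[OF s] using True u by (intro SUP_upper) auto
      also have "\<dots> \<le> ennreal (I t) * weighted_sup I h s"
        using mono_le[OF s t \<open>s \<le> t\<close>] by (intro mult_right_mono ennreal_leI) auto
      finally show ?thesis .
    next
      case False
      then have "u \<in> unitI"
        using u t by auto
      then have "ennreal (I u) * h u \<le> ennreal (I t) * h s"
        using mono_le[OF _ t] monotone_onD[OF h s] u False by (intro mult_mono ennreal_leI) auto
      also have "\<dots> \<le> ennreal (I t) * weighted_sup I h s"
        by (intro mult_left_mono le_weighted_sup s) simp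
      finally show ?thesis .
    qed
  qed
  then show "weighted_sup I h t \<le> weighted_sup I h s"
    unfolding weighted_sup_def[of I h t] ennreal_divide_le_iff[OF pos[OF t]] by (simp add: mult.commute)
qed

lemma weighted_sup_idem:
  assumes t: "t \<in> unitI"
  shows "weighted_sup I (weighted_sup I h) t = weighted_sup I h t"
proof (rule order.antisym)
  have "(SUP s\<in>{0<..t}. ennreal (I s) * weighted_sup I h s) \<le> ennreal (I t) * weighted_sup I h t"
  proof (rule SUP_least)
    fix s assume s: "s \<in> {0<..t}"
    then have "ennreal (I s) * weighted_sup I h s = (SUP u\<in>{0<..s}. ennreal (I u) * h u)"
      using t by (intro mult_weighted_sup) auto
    also have "\<dots> \<le> ennreal (I t) * weighted_sup I h t"
      unfolding mult_weighted_sup[OF t] using s by (intro SUP_subset_mono) auto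
    finally show "ennreal (I s) * weighted_sup I h s \<le> ennreal (I t) * weighted_sup I h t" .
  qed
  then show "weighted_sup I (weighted_sup I h) t \<le> weighted_sup I h t"
    unfolding weighted_sup_def[of I "weighted_sup I h" t] ennreal_divide_le_iff[OF pos[OF t]]
    by (simp add: mult.commute)
qed (rule le_weighted_sup[OF t])

lemma meas01_S_op: "meas01 (S_op I f)"
  unfolding S_op_eq_weighted_sup by (rule meas01_weighted_sup)

lemma S_op_S_op_le:
  assumes t: "t \<in> unitI"
  shows "S_op I (S_op I f) t \<le> S_op I f t"
proof -
  have "antimono_on unitI (S_op I f)"
    unfolding S_op_eq_weighted_sup
    by (intro weighted_sup_antimono monotone_onI rearr_antimono)
  then have "S_op I (S_op I f) t \<le> weighted_sup I (S_op I f) t"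
    unfolding S_op_eq_weighted_sup[of I "S_op I f"] using t
    by (intro weighted_sup_mono rearr_le_antimono_on) auto
  also have "\<dots> = S_op I f t"
    unfolding S_op_eq_weighted_sup by (rule weighted_sup_idem[OF t])
  finally show ?thesis .
qed

text \<open>The doubling condition compensates for the halved argument in rearr_add.\<close>
lemma S_op_add_le:
  assumes f: "meas01 f" and g: "meas01 g" and C: "0 \<le> C"
    and dbl: "\<And>t. t \<in> {0<..<1/2} \<Longrightarrow> I (2 * t) \<le> C * I t"
    and t: "t \<in> unitI"
  shows "S_op I (\<lambda>t. f t + g t) t \<le> ennreal C * (S_op I f t + S_op I g t)"
proof -
  have bound: "ennreal (I s) * rearr (\<lambda>t. f t + g t) s
      \<le> ennreal (I (s/2)) * (ennreal C * (rearr f (s/2) + rearr g (s/2)))"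
    if s: "s \<in> {0<..t}" for s
  proof -
    have "I s \<le> C * I (s/2)"
      using dbl[of "s/2"] s t by simp
    then have "ennreal (I s) \<le> ennreal C * ennreal (I (s/2))"
      using C pos[of "s/2"] s t by (simp add: ennreal_leI flip: ennreal_mult)
    then have "ennreal (I s) * rearr (\<lambda>t. f t + g t) s
        \<le> (ennreal C * ennreal (I (s/2))) * (rearr f (s/2) + rearr g (s/2))"
      using s by (intro mult_mono rearr_add f g) auto
    then show ?thesis
      by (simp add: mult_ac)
  qed
  have "S_op I (\<lambda>t. f t + g t) t \<le> weighted_sup I (\<lambda>s. ennreal C * (rearr f s + rearr g s)) t"
    unfolding S_op_def weighted_sup_def
  proof (intro divide_right_mono_ennreal SUP_least)
    fix s assume s: "s \<in> {0<..t}"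
    have "ennreal (I (s/2)) * (ennreal C * (rearr f (s/2) + rearr g (s/2)))
        \<le> (SUP u\<in>{0<..t}. ennreal (I u) * (ennreal C * (rearr f u + rearr g u)))"
      using s by (intro SUP_upper) auto
    with bound[OF s] show "ennreal (I s) * rearr (\<lambda>t. f t + g t) s
        \<le> (SUP u\<in>{0<..t}. ennreal (I u) * (ennreal C * (rearr f u + rearr g u)))"
      by (rule order_trans)
  qed
  also have "\<dots> \<le> ennreal C * (S_op I f t + S_op I g t)"
    unfolding weighted_sup_cmult S_op_eq_weighted_sup by (intro mult_left_mono weighted_sup_add) auto
  finally show ?thesis .
qed

end

section \<open>Rearrangement-invariant norms\<close>

lemma ri_common_cmult:
  "ri_common \<rho> \<Longrightarrow> meas01 f \<Longrightarrow> 0 \<le> a \<Longrightarrow> \<rho> (\<lambda>t. ennreal a * f t) = ennreal a * \<rho> f"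
  unfolding ri_common_def by blast

lemma ri_common_mono_on:
  assumes "ri_common \<rho>" "meas01 f" "meas01 g" "\<And>t. t \<in> unitI \<Longrightarrow> g t \<le> f t"
  shows "\<rho> g \<le> \<rho> f"
proof -
  have "AE t in lebesgue_on unitI. g t \<le> f t"
    using assms(4) by (intro AE_I2) simp
  then show ?thesis
    using assms(1-3) unfolding ri_common_def by blast
qed

lemma ri_common_cong_on:
  assumes "ri_common \<rho>" "meas01 f" "meas01 g" "\<And>t. t \<in> unitI \<Longrightarrow> f t = g t"
  shows "\<rho> f = \<rho> g"
  using assms by (intro order.antisym ri_common_mono_on[OF assms(1)]) auto

lemma ri_common_monotone_convergence:
  assumes "ri_common \<rho>" "\<And>n. meas01 (F n)" "meas01 f"
    and "\<And>t. t \<in> unitI \<Longrightarrow> incseq (\<lambda>n. F n t) \<and> (\<lambda>n. F n t) \<longlonglongrightarrow> f t"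
  shows "incseq (\<lambda>n. \<rho> (F n)) \<and> (\<lambda>n. \<rho> (F n)) \<longlonglongrightarrow> \<rho> f"
proof -
  have "AE t in lebesgue_on unitI. incseq (\<lambda>n. F n t) \<and> (\<lambda>n. F n t) \<longlonglongrightarrow> f t"
    using assms(4) by (intro AE_I2) simp
  then show ?thesis
    using assms(1-3) unfolding ri_common_def by blast
qed

lemma ri_common_rearr: "ri_common \<rho> \<Longrightarrow> meas01 f \<Longrightarrow> \<rho> f = \<rho> (rearr f)"
  unfolding ri_common_def by blast

lemma ri_norm_ri_common: "ri_norm \<rho> \<Longrightarrow> ri_common \<rho>"
  by (simp add: ri_norm_def)

lemma ri_norm_triangle: "ri_norm \<rho> \<Longrightarrow> meas01 f \<Longrightarrow> meas01 g \<Longrightarrow> \<rho> (\<lambda>t. f t + g t) \<le> \<rho> f + \<rho> g"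
  unfolding ri_norm_def by blast

lemma equiv_normsI:
  assumes le: "\<And>f. meas01 f \<Longrightarrow> \<rho> f \<le> \<sigma> f"
    and ge: "\<And>f. meas01 f \<Longrightarrow> \<sigma> f \<le> ennreal C * \<rho> f"
  shows "equiv_norms \<rho> \<sigma>"
  unfolding equiv_norms_def
proof (intro exI conjI allI impI)
  let ?C = "max C 1"
  fix f assume f: "meas01 f"
  have "\<sigma> f \<le> ennreal ?C * \<rho> f"
    using ge[OF f] by (rule order_trans) (intro mult_right_mono ennreal_leI, auto)
  then have "ennreal (1 / ?C) * \<sigma> f \<le> ennreal (1 / ?C) * (ennreal ?C * \<rho> f)"
    by (rule mult_left_mono) simp
  also have "\<dots> = \<rho> f"
    by (simp add: mult.assoc[symmetric] flip: ennreal_mult)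
  finally show "ennreal (1 / ?C) * \<sigma> f \<le> \<rho> f" .
  show "\<rho> f \<le> ennreal 1 * \<sigma> f"
    using le[OF f] by simp
qed auto

lemma ri_common_comp:
  assumes X: "ri_common X"
    and meas: "\<And>f. meas01 (T f)"
    and cmult: "\<And>f a t. meas01 f \<Longrightarrow> 0 \<le> a \<Longrightarrow> t \<in> unitI \<Longrightarrow>
      T (\<lambda>t. ennreal a * f t) t = ennreal a * T f t"
    and mono: "\<And>f g t. meas01 f \<Longrightarrow> meas01 g \<Longrightarrow> (AE t in lebesgue_on unitI. g t \<le> f t) \<Longrightarrow>
      t \<in> unitI \<Longrightarrow> T g t \<le> T f t"
    and SUP: "\<And>F f t. (\<And>n. meas01 (F n)) \<Longrightarrow> meas01 f \<Longrightarrow>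
      (AE t in lebesgue_on unitI. incseq (\<lambda>n. F n t) \<and> (\<lambda>n. F n t) \<longlonglongrightarrow> f t) \<Longrightarrow>
      t \<in> unitI \<Longrightarrow> T f t = (SUP n. T (F n) t)"
    and lower: "\<And>f t. meas01 f \<Longrightarrow> t \<in> unitI \<Longrightarrow> rearr f t \<le> T f t"
    and vanish: "\<And>f t. meas01 f \<Longrightarrow> (AE t in lebesgue_on unitI. f t = 0) \<Longrightarrow>
      t \<in> unitI \<Longrightarrow> T f t = 0"
    and ind: "\<And>t. t \<in> unitI \<Longrightarrow> T (indicator unitI) t \<le> 1"
    and rearr: "\<And>f. meas01 f \<Longrightarrow> T (rearr f) = T f"
  shows "ri_common (\<lambda>f. X (T f))"
  unfolding ri_common_def
proof (intro conjI allI impI)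
  fix f and a :: real assume "meas01 f \<and> 0 \<le> a"
  then show "X (T (\<lambda>t. ennreal a * f t)) = ennreal a * X (T f)"
    using ri_common_cong_on[OF X meas meas01_cmult[OF meas]] cmult ri_common_cmult[OF X meas]
    by simp
next
  fix f assume f: "meas01 f"
  have "X (T f) = 0 \<longleftrightarrow> (AE t in lebesgue_on unitI. T f t = 0)"
    using X meas unfolding ri_common_def by blast
  also have "\<dots> \<longleftrightarrow> (AE t in lebesgue_on unitI. f t = 0)"
  proof
    show "AE t in lebesgue_on unitI. f t = 0" if "AE t in lebesgue_on unitI. T f t = 0"
      using AE_eq_0_if_rearr_le[of f "T f"] f lower[OF f] that by blast
    show "AE t in lebesgue_on unitI. T f t = 0" if f0: "AE t in lebesgue_on unitI. f t = 0"
      using vanish[OF f f0] by (intro AE_I2) simp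
  qed
  finally show "X (T f) = 0 \<longleftrightarrow> (AE t in lebesgue_on unitI. f t = 0)" .
next
  fix f g assume "meas01 f \<and> meas01 g \<and> (AE t in lebesgue_on unitI. g t \<le> f t)"
  then show "X (T g) \<le> X (T f)"
    by (intro ri_common_mono_on[OF X meas meas] mono) auto
next
  fix F f assume Ff: "(\<forall>n. meas01 (F n)) \<and> meas01 f \<and>
      (AE t in lebesgue_on unitI. incseq (\<lambda>n. F n t) \<and> (\<lambda>n. F n t) \<longlonglongrightarrow> f t)"
  then have F: "\<And>n. meas01 (F n)" and f: "meas01 f"
    and conv: "AE t in lebesgue_on unitI. incseq (\<lambda>n. F n t) \<and> (\<lambda>n. F n t) \<longlonglongrightarrow> f t"
    by blast+
  have "incseq (\<lambda>n. T (F n) t) \<and> (\<lambda>n. T (F n) t) \<longlonglongrightarrow> T f t" if t: "t \<in> unitI" for t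
  proof
    show inc: "incseq (\<lambda>n. T (F n) t)"
      unfolding incseq_def using F t AE_incseq_le[OF conv] by (blast intro: mono)
    have "T f t = (SUP n. T (F n) t)"
      by (rule SUP[OF F f conv t])
    then show "(\<lambda>n. T (F n) t) \<longlonglongrightarrow> T f t"
      using LIMSEQ_SUP[OF inc] by simp
  qed
  then have "incseq (\<lambda>n. X (T (F n))) \<and> (\<lambda>n. X (T (F n))) \<longlonglongrightarrow> X (T f)"
    by (rule ri_common_monotone_convergence[OF X meas meas])
  then show "incseq (\<lambda>n. X (T (F n)))" "(\<lambda>n. X (T (F n))) \<longlonglongrightarrow> X (T f)"
    by auto
next
  have "X (T (indicator unitI)) \<le> X (indicator unitI)"
    using ind by (intro ri_common_mono_on[OF X meas01_indicator meas]) simp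
  also have "\<dots> < \<infinity>"
    using X unfolding ri_common_def by blast
  finally show "X (T (indicator unitI)) < \<infinity>" .
next
  fix f assume "meas01 f"
  then show "X (T f) = X (T (rearr f))"
    by (simp add: rearr)
qed

context weight
begin

lemma ri_common_S_op:
  assumes X: "ri_common X"
  shows "ri_common (\<lambda>f. X (S_op I f))"
proof (rule ri_common_comp[OF X meas01_S_op])
  show "S_op I (\<lambda>t. ennreal a * f t) t = ennreal a * S_op I f t" if "meas01 f" "0 \<le> a" for f a t
    unfolding S_op_eq_weighted_sup rearr_cmult[OF that, abs_def] by (rule weighted_sup_cmult)
  show "S_op I g t \<le> S_op I f t"
    if "meas01 f" "meas01 g" "AE t in lebesgue_on unitI. g t \<le> f t" for f g t
    unfolding S_op_eq_weighted_sup by (intro weighted_sup_mono rearr_mono_AE that)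
  show "S_op I f t = (SUP n. S_op I (F n) t)"
    if "\<And>n. meas01 (F n)" "meas01 f"
      "AE t in lebesgue_on unitI. incseq (\<lambda>n. F n t) \<and> (\<lambda>n. F n t) \<longlonglongrightarrow> f t" for F f t
    unfolding S_op_eq_weighted_sup rearr_SUP[OF that, abs_def] by (rule weighted_sup_SUP)
  show "rearr f t \<le> S_op I f t" if "t \<in> unitI" for f t
    unfolding S_op_eq_weighted_sup by (rule le_weighted_sup[OF that])
  show "S_op I f t = 0" if "meas01 f" "AE t in lebesgue_on unitI. f t = 0" for f t
    unfolding S_op_eq_weighted_sup by (intro weighted_sup_eq_0 rearr_eq_0[OF that]) simp
  show "S_op I (indicator unitI) t \<le> 1" if "t \<in> unitI" for t
    unfolding S_op_eq_weighted_sup by (intro weighted_sup_le_const[OF that] rearr_indicator_le_1)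
  show "S_op I (rearr f) = S_op I f" if "meas01 f" for f
    by (simp add: S_op_eq_weighted_sup rearr_rearr[OF that])
qed

lemma riq_norm_S_op:
  assumes X: "ri_norm X" and dbl: "\<forall>t\<in>{0<..<1/2}. I (2 * t) \<le> C * I t"
  shows "riq_norm (\<lambda>f. X (S_op I f))"
  unfolding riq_norm_def
proof (intro conjI exI[of _ "max C 1"] allI impI)
  have Xc: "ri_common X"
    using X by (rule ri_norm_ri_common)
  then show "ri_common (\<lambda>f. X (S_op I f))"
    by (rule ri_common_S_op)
  have dbl': "I (2 * t) \<le> max C 1 * I t" if "t \<in> {0<..<1/2}" for t
  proof -
    have "I (2 * t) \<le> C * I t"
      using dbl that by blast
    also have "\<dots> \<le> max C 1 * I t"
      using that pos[of t] by (intro mult_right_mono) auto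
    finally show ?thesis .
  qed
  fix f g assume fg: "meas01 f \<and> meas01 g"
  have "X (S_op I (\<lambda>t. f t + g t)) \<le> X (\<lambda>t. ennreal (max C 1) * (S_op I f t + S_op I g t))"
    using fg dbl' by (intro ri_common_mono_on[OF Xc] meas01_cmult meas01_add meas01_S_op S_op_add_le) auto
  also have "\<dots> = ennreal (max C 1) * X (\<lambda>t. S_op I f t + S_op I g t)"
    by (intro ri_common_cmult[OF Xc] meas01_add meas01_S_op) auto
  also have "\<dots> \<le> ennreal (max C 1) * (X (S_op I f) + X (S_op I g))"
    by (intro mult_left_mono ri_norm_triangle[OF X] meas01_S_op) auto
  finally show "X (S_op I (\<lambda>t. f t + g t)) \<le> ennreal (max C 1) * (X (S_op I f) + X (S_op I g))" .
qed simp

lemma S_op_bounded: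
  assumes "ri_common X"
  shows "X (S_op I (S_op I f)) \<le> X (S_op I f)"
  by (intro ri_common_mono_on[OF assms] meas01_S_op S_op_S_op_le)

lemma ri_common_weighted_sup_rearr_avg:
  assumes X: "ri_common X"
  shows "ri_common (\<lambda>f. X (weighted_sup I (rearr_avg f)))"
proof (rule ri_common_comp[OF X meas01_weighted_sup])
  show "weighted_sup I (rearr_avg (\<lambda>t. ennreal a * f t)) t = ennreal a * weighted_sup I (rearr_avg f) t"
    if "meas01 f" "0 \<le> a" "t \<in> unitI" for f a t
  proof -
    have "rearr_avg (\<lambda>t. ennreal a * f t) s = ennreal a * rearr_avg f s" if "s \<in> {0<..t}" for s
      using that \<open>t \<in> unitI\<close>
      by (simp add: rearr_avg_def rearr_int_cmult[OF \<open>meas01 f\<close> \<open>0 \<le> a\<close>] ennreal_times_divide)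
    then have "weighted_sup I (rearr_avg (\<lambda>t. ennreal a * f t)) t
        = weighted_sup I (\<lambda>s. ennreal a * rearr_avg f s) t"
      by (rule weighted_sup_cong)
    then show ?thesis
      by (simp add: weighted_sup_cmult)
  qed
  show "weighted_sup I (rearr_avg g) t \<le> weighted_sup I (rearr_avg f) t"
    if "meas01 f" "meas01 g" "AE t in lebesgue_on unitI. g t \<le> f t" for f g t
    unfolding rearr_avg_def
    by (intro weighted_sup_mono divide_right_mono_ennreal rearr_int_mono_AE that)
  show "weighted_sup I (rearr_avg f) t = (SUP n. weighted_sup I (rearr_avg (F n)) t)"
    if F: "\<And>n. meas01 (F n)" "meas01 f"
      "AE t in lebesgue_on unitI. incseq (\<lambda>n. F n t) \<and> (\<lambda>n. F n t) \<longlonglongrightarrow> f t"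
      and t: "t \<in> unitI" for F f t
  proof -
    have "rearr_avg f s = (SUP n. rearr_avg (F n) s)" if "s \<in> {0<..t}" for s
      using that t by (simp add: rearr_avg_def rearr_int_SUP[OF F] SUP_divide_ennreal)
    then have "weighted_sup I (rearr_avg f) t = weighted_sup I (\<lambda>s. SUP n. rearr_avg (F n) s) t"
      by (rule weighted_sup_cong)
    then show ?thesis
      by (simp add: weighted_sup_SUP)
  qed
  show "rearr f t \<le> weighted_sup I (rearr_avg f) t" if "t \<in> unitI" for f t
    using that by (intro order_trans[OF rearr_le_rearr_avg le_weighted_sup]) auto
  show "weighted_sup I (rearr_avg f) t = 0"
    if "meas01 f" "AE t in lebesgue_on unitI. f t = 0" for f t
    by (intro weighted_sup_eq_0 rearr_avg_eq_0[OF that])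
  show "weighted_sup I (rearr_avg (indicator unitI)) t \<le> 1" if "t \<in> unitI" for t
    by (intro weighted_sup_le_const[OF that] rearr_avg_le_const rearr_indicator_le_1) auto
  show "weighted_sup I (rearr_avg (rearr f)) = weighted_sup I (rearr_avg f)" if "meas01 f" for f
    by (simp add: rearr_avg_rearr[OF that])
qed

lemma ri_norm_weighted_sup_rearr_avg:
  assumes X: "ri_norm X"
  shows "ri_norm (\<lambda>f. X (weighted_sup I (rearr_avg f)))"
proof -
  have Xc: "ri_common X"
    using X by (rule ri_norm_ri_common)
  obtain C :: real where C: "\<And>f. meas01 f \<Longrightarrow> (\<integral>\<^sup>+ t\<in>unitI. f t \<partial>lebesgue) \<le> ennreal C * X f"
    using X unfolding ri_norm_def by blast
  have X_le: "X f \<le> X (weighted_sup I (rearr_avg f))" if f: "meas01 f" for f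
    unfolding ri_common_rearr[OF Xc f]
    by (intro ri_common_mono_on[OF Xc] meas01_rearr meas01_weighted_sup
          order_trans[OF rearr_le_rearr_avg le_weighted_sup]) auto
  show ?thesis
    unfolding ri_norm_def
  proof (intro conjI allI impI exI[of _ C])
    show "ri_common (\<lambda>f. X (weighted_sup I (rearr_avg f)))"
      by (rule ri_common_weighted_sup_rearr_avg[OF Xc])
  next
    fix f g assume "meas01 f \<and> meas01 g"
    then have "X (weighted_sup I (rearr_avg (\<lambda>t. f t + g t)))
        \<le> X (\<lambda>t. weighted_sup I (rearr_avg f) t + weighted_sup I (rearr_avg g) t)"
      by (intro ri_common_mono_on[OF Xc] meas01_add meas01_weighted_sup
            order_trans[OF weighted_sup_mono weighted_sup_add] rearr_avg_add) auto
    also have "\<dots> \<le> X (weighted_sup I (rearr_avg f)) + X (weighted_sup I (rearr_avg g))"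
      by (intro ri_norm_triangle[OF X] meas01_weighted_sup)
    finally show "X (weighted_sup I (rearr_avg (\<lambda>t. f t + g t)))
        \<le> X (weighted_sup I (rearr_avg f)) + X (weighted_sup I (rearr_avg g))" .
  next
    fix f assume f: "meas01 f"
    have "(\<integral>\<^sup>+ t\<in>unitI. f t \<partial>lebesgue) \<le> ennreal C * X f"
      by (rule C[OF f])
    also have "\<dots> \<le> ennreal C * X (weighted_sup I (rearr_avg f))"
      using X_le[OF f] by (rule mult_left_mono) simp
    finally show "(\<integral>\<^sup>+ t\<in>unitI. f t \<partial>lebesgue) \<le> ennreal C * X (weighted_sup I (rearr_avg f))" .
  qed
qed

lemma rearr_int_le_sup_integral:
  assumes s: "s \<in> unitI"
  shows "rearr_int f s \<le> (SUP u\<in>{0<..s}. ennreal (I u) * rearr f u)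
    * (\<integral>\<^sup>+ u\<in>{0<..<s}. ennreal (1 / I u) \<partial>lebesgue)"
proof -
  let ?M = "SUP u\<in>{0<..s}. ennreal (I u) * rearr f u"
  have A: "{0<..<s} \<subseteq> unitI"
    using s by auto
  have "rearr f u \<le> ?M * ennreal (1 / I u)" if u: "u \<in> {0<..<s}" for u
  proof -
    have "rearr f u * ennreal (I u) \<le> ?M"
      using u by (subst mult.commute) (intro SUP_upper, auto)
    moreover have "?M * ennreal (1 / I u) = ?M / ennreal (I u)"
      using pos[of u] u s by (simp add: divide_ennreal[symmetric] ennreal_times_divide)
    ultimately show ?thesis
      using pos[of u] u s by (simp add: ennreal_le_divide_iff)
  qed
  then have "rearr_int f s \<le> (\<integral>\<^sup>+ u\<in>{0<..<s}. ?M * ennreal (1 / I u) \<partial>lebesgue)"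
    unfolding rearr_int_def by (intro nn_integral_mono) (auto split: split_indicator)
  also have "\<dots> = ?M * (\<integral>\<^sup>+ u\<in>{0<..<s}. ennreal (1 / I u) \<partial>lebesgue)"
  proof -
    have "meas01 (\<lambda>u. ennreal (1 / I u))"
      by (rule meas01_antimono_on)
         (auto intro!: monotone_onI ennreal_leI divide_left_mono mono_le pos mult_pos_pos)
    moreover have "{0<..<s} \<in> sets (lebesgue_on unitI)"
      using A by (simp add: sets_restrict_space_iff)
    ultimately show ?thesis
      unfolding set_nn_integral_eq_restrict_unitI[OF A] meas01_def
      by (subst nn_integral_cmult[symmetric]) (auto simp: mult.assoc intro!: borel_measurable_times_ennreal borel_measurable_indicator)
  qed
  finally show ?thesis .
qed

lemma weighted_sup_rearr_avg_le:
  assumes C: "0 \<le> C"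
    and int: "\<forall>t\<in>unitI. (\<integral>\<^sup>+ s\<in>{0<..<t}. ennreal (1 / I s) \<partial>lebesgue) \<le> ennreal (C * t / I t)"
    and t: "t \<in> unitI"
  shows "weighted_sup I (rearr_avg f) t \<le> ennreal C * S_op I f t"
proof -
  define M where "M s = (SUP u\<in>{0<..s}. ennreal (I u) * rearr f u)" for s
  have "ennreal (I s) * rearr_avg f s \<le> ennreal C * M t" if s: "s \<in> {0<..t}" for s
  proof -
    have sI: "s \<in> unitI"
      using s t by auto
    have "rearr_int f s \<le> M s * (\<integral>\<^sup>+ u\<in>{0<..<s}. ennreal (1 / I u) \<partial>lebesgue)"
      unfolding M_def by (rule rearr_int_le_sup_integral[OF sI])
    also have "\<dots> \<le> M s * ennreal (C * s / I s)"
      using int sI by (intro mult_left_mono) auto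
    finally have "rearr_int f s \<le> M s * ennreal (C * s / I s)" .
    then have "ennreal (I s) * rearr_avg f s \<le> ennreal (I s) * (M s * ennreal (C * s / I s) / ennreal s)"
      unfolding rearr_avg_def by (intro mult_left_mono divide_right_mono_ennreal) auto
    also have "\<dots> = M s * (ennreal (I s) * ennreal (C * s / I s) / ennreal s)"
      by (simp add: ennreal_times_divide mult.left_commute)
    also have "ennreal (I s) * ennreal (C * s / I s) = ennreal (C * s)"
      using pos[OF sI] C sI by (subst ennreal_mult[symmetric]) auto
    also have "ennreal (C * s) / ennreal s = ennreal C"
      using sI C by (subst divide_ennreal) auto
    also have "M s * ennreal C \<le> ennreal C * M t"
      using s unfolding M_def mult.commute[of _ "ennreal C"]
      by (intro mult_left_mono SUP_subset_mono) auto
    finally show ?thesis .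
  qed
  then have "weighted_sup I (rearr_avg f) t \<le> (ennreal C * M t) / ennreal (I t)"
    unfolding weighted_sup_def by (intro divide_right_mono_ennreal SUP_least)
  also have "\<dots> = ennreal C * S_op I f t"
    unfolding S_op_def M_def by (simp add: ennreal_times_divide)
  finally show ?thesis .
qed

lemma equiv_norms_S_op_weighted_sup_rearr_avg:
  assumes X: "ri_common X"
    and int: "\<forall>t\<in>unitI. (\<integral>\<^sup>+ s\<in>{0<..<t}. ennreal (1 / I s) \<partial>lebesgue) \<le> ennreal (C * t / I t)"
  shows "equiv_norms (\<lambda>f. X (S_op I f)) (\<lambda>f. X (weighted_sup I (rearr_avg f)))"
proof (rule equiv_normsI)
  fix f
  show "X (S_op I f) \<le> X (weighted_sup I (rearr_avg f))"
    unfolding S_op_eq_weighted_sup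
    by (intro ri_common_mono_on[OF X] meas01_weighted_sup weighted_sup_mono rearr_le_rearr_avg) auto
  have "ennreal (C * t / I t) \<le> ennreal (max C 0 * t / I t)" if "t \<in> unitI" for t
    using that pos[OF that] by (intro ennreal_leI divide_right_mono mult_right_mono) auto
  then have int': "\<forall>t\<in>unitI. (\<integral>\<^sup>+ s\<in>{0<..<t}. ennreal (1 / I s) \<partial>lebesgue) \<le> ennreal (max C 0 * t / I t)"
    using int by (meson order_trans)
  have "X (weighted_sup I (rearr_avg f)) \<le> X (\<lambda>t. ennreal (max C 0) * S_op I f t)"
    by (intro ri_common_mono_on[OF X] meas01_cmult meas01_S_op meas01_weighted_sup
          weighted_sup_rearr_avg_le[OF _ int']) auto
  also have "\<dots> = ennreal (max C 0) * X (S_op I f)"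
    by (intro ri_common_cmult[OF X] meas01_S_op) auto
  finally show "X (weighted_sup I (rearr_avg f)) \<le> ennreal (max C 0) * X (S_op I f)" .
qed

end

theorem theorem3p11:
  fixes I :: "real \<Rightarrow> real" and X :: "(real \<Rightarrow> ennreal) \<Rightarrow> ennreal"
  assumes I_bij: "bij_betw I {0<..<1} {0<..<1}"
    and I_mono: "mono_on {0<..<1} I"
    and I_doubling: "\<exists>c C. 0 < c \<and> 0 < C \<and>
        (\<forall>t\<in>{0<..<1/2}. c * I t \<le> I (2 * t) \<and> I (2 * t) \<le> C * I t)"
    and X_ri: "ri_norm X"
  shows "riq_norm (\<lambda>f. X (S_op I f))
    \<and> (\<exists>C::real. \<forall>f. meas01 f \<longrightarrow> X (S_op I (S_op I f)) \<le> ennreal C * X (S_op I f))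
    \<and> ((\<exists>C::real. \<forall>t\<in>{0<..<1}.
           (\<integral>\<^sup>+ s\<in>{0<..<t}. ennreal (1 / I s) \<partial>lebesgue) \<le> ennreal (C * t / I t))
        \<longrightarrow> (\<exists>\<rho>. ri_norm \<rho> \<and> equiv_norms (\<lambda>f. X (S_op I f)) \<rho>))"
proof -
  interpret weight I
    using bij_betwE[OF I_bij] I_mono by unfold_locales auto
  have X_common: "ri_common X"
    using X_ri by (rule ri_norm_ri_common)
  obtain C where "\<forall>t\<in>{0<..<1/2}. I (2 * t) \<le> C * I t"
    using I_doubling by blast
  then have "riq_norm (\<lambda>f. X (S_op I f))"
    by (rule riq_norm_S_op[OF X_ri])
  moreover have "\<forall>f. meas01 f \<longrightarrow> X (S_op I (S_op I f)) \<le> ennreal 1 * X (S_op I f)"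
    using S_op_bounded[OF X_common] by simp
  moreover have "\<exists>\<rho>. ri_norm \<rho> \<and> equiv_norms (\<lambda>f. X (S_op I f)) \<rho>"
    if "\<exists>C::real. \<forall>t\<in>{0<..<1}.
      (\<integral>\<^sup>+ s\<in>{0<..<t}. ennreal (1 / I s) \<partial>lebesgue) \<le> ennreal (C * t / I t)"
    using that ri_norm_weighted_sup_rearr_avg[OF X_ri]
      equiv_norms_S_op_weighted_sup_rearr_avg[OF X_common] by blast
  ultimately show ?thesis
    by blast
qed

end
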